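(* Let $f:\mathbb{R}\to\mathbb{R}_{\geq 0}$ be a probability density function that is monotonically non-increasing on $\mathbb{R}_{\geq 0}$ and satisfies $\int_0^\infty f(t)\,dt = \frac{1}{2}$. For $x \geq 0$ define $$\alpha(x) := 4 \int_0^x f(t)\,dt \int_x^\infty t f(t)\,dt - \frac{x}{2} + 2x\left(\int_0^x f(t)\,dt\right)^2.$$ Then $\alpha(x) \geq 0$ for every $x \geq 0$. If $f$ is strictly decreasing on $\mathbb{R}_{\geq 0}$, then $\alpha(x) > 0$ for every $x > 0$. Moreover, $\alpha(x) = 0$ for all $x \geq 0$ if and only if there is $a > 0$ such that $f(t) = \frac{1}{2a}$ for $0 \leq t \leq a$ and $f(t) = 0$ for $t > a$. *)

theory Defs
  imports "HOL-Analysis.Analysis"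
begin

definition cdf0 :: "(real \<Rightarrow> real) \<Rightarrow> real \<Rightarrow> real" where
  "cdf0 f x = (LBINT t:{0..x}. f t)"

text \<open>alpha(x), valued in the extended reals since the tail moment
  integral of t f(t) over [x,oo) may be infinite.\<close>
definition alpha :: "(real \<Rightarrow> real) \<Rightarrow> real \<Rightarrow> ereal" where
  "alpha f x =
     ereal (4 * cdf0 f x) * enn2ereal (\<integral>\<^sup>+ t\<in>{x..}. ennreal (t * f t) \<partial>lborel)
     - ereal (x / 2) + ereal (2 * x * (cdf0 f x)\<^sup>2)"

end

theory Submission
  imports Defs
begin

text \<open>Write \<open>F = cdf0 f x\<close>, \<open>T = 1/2 - F\<close> for the mass beyond \<open>x\<close> and \<open>G\<close> for the
  first moment beyond \<open>x\<close>. Since \<open>f \<le> f x\<close> beyond \<open>x\<close>, the mass \<open>T\<close> has its first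
  moment minimised when it is spread uniformly with height \<open>f x\<close> right after \<open>x\<close>, so
  \<open>G \<ge> x T + T\<^sup>2 / (2 f x)\<close>. Substituting \<open>T = 1/2 - F\<close> turns this into
  \<open>alpha f x \<ge> 2 T\<^sup>2 (F - x f x) / f x\<close>, and \<open>F \<ge> x f x\<close> by monotonicity. For strictly
  decreasing \<open>f\<close> both factors are positive. If \<open>alpha\<close> vanishes identically, then
  \<open>F = x f x\<close> wherever \<open>T > 0\<close>, which forces \<open>f\<close> to be constant on its support
  \<open>(0, a)\<close>; the total mass \<open>1/2\<close> then fixes the constant to \<open>1 / (2 a)\<close>.\<close>

lemma nn_integral_linear_decay:
  fixes c x s :: real
  assumes "0 \<le> c" "x \<le> s"
  shows "(\<integral>\<^sup>+ t. ennreal (c * (s - t)) * indicator {x..s} t \<partial>lborel) = ennreal (c * (s - x)\<^sup>2 / 2)"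
proof (rule nn_integral_has_integral_lebesgue')
  have "((\<lambda>t. c * s - c * t) has_integral c * s * (s - x) - c * ((s\<^sup>2 - x\<^sup>2) / 2)) {x..s}"
    using has_integral_const_real[of "c * s" x s] has_integral_mult_right[OF ident_has_integral[OF assms(2)], of c]
      assms(2) by (intro has_integral_diff) (auto simp: mult.commute)
  moreover have "c * s * (s - x) - c * ((s\<^sup>2 - x\<^sup>2) / 2) = c * (s - x)\<^sup>2 / 2"
    by (simp add: field_simps power2_eq_square)
  ultimately show "((\<lambda>t. c * (s - t)) has_integral c * (s - x)\<^sup>2 / 2) {x..s}"
    by (metis (no_types, lifting) right_diff_distrib has_integral_cong)
qed (use assms in auto)

lemma ereal_affine_mono:
  assumes "0 \<le> a" "ereal g \<le> G"
  shows "ereal (a * g - b + c) \<le> ereal a * G - ereal b + ereal c"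
proof (cases G)
  case (real r)
  then have "a * g \<le> a * r" using assms by (simp add: mult_left_mono)
  then show ?thesis using real by simp
qed (use assms in auto)

locale nonincreasing_density =
  fixes f :: "real \<Rightarrow> real"
  assumes f_measurable [measurable]: "f \<in> borel_measurable borel"
    and f_nonneg: "\<And>t. 0 \<le> f t"
    and f_integrable: "integrable lborel f"
    and f_antimono: "\<And>s t. 0 \<le> s \<Longrightarrow> s \<le> t \<Longrightarrow> f t \<le> f s"
begin

lemma set_integrable_f: "A \<in> sets borel \<Longrightarrow> set_integrable lborel A f"
  unfolding set_integrable_def by (intro integrable_mult_indicator) (auto simp: f_integrable)

lemma set_integral_f_mono_set:
  assumes "B \<subseteq> A" "A \<in> sets borel" "B \<in> sets borel"
  shows "(LBINT t:B. f t) \<le> (LBINT t:A. f t)"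
  unfolding set_lebesgue_integral_def using assms f_nonneg
  by (intro integral_mono set_integrable_f[unfolded set_integrable_def]) (auto simp: indicator_def)

lemma set_integral_f_nonneg: "A \<in> sets borel \<Longrightarrow> 0 \<le> (LBINT t:A. f t)"
  using set_integral_f_mono_set[of "{}" A] by (simp add: set_lebesgue_integral_def)

lemma set_integral_f_Un:
  assumes "A \<inter> B = {}" "A \<in> sets borel" "B \<in> sets borel"
  shows "(LBINT t:A \<union> B. f t) = (LBINT t:A. f t) + (LBINT t:B. f t)"
  using assms by (intro set_integral_Un set_integrable_f)

lemma set_integral_f_ge:
  assumes "0 \<le> x" "x \<le> y" "{x<..y} \<subseteq> A" "A \<in> sets borel"
  shows "(y - x) * f y \<le> (LBINT t:A. f t)"
proof -
  have "(y - x) * f y = (LBINT t:{x<..y}. f y)"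
    using assms(2) by (simp add: set_integral_const)
  also have "\<dots> \<le> (LBINT t:{x<..y}. f t)"
  proof (rule set_integral_mono)
    show "set_integrable lborel {x<..y} (\<lambda>t. f y)"
      using assms(2)
      by (auto intro!: integrable_mult_left integrable_real_indicator simp: set_integrable_def)
  qed (use assms f_antimono set_integrable_f in auto)
  also have "\<dots> \<le> (LBINT t:A. f t)"
    using assms by (intro set_integral_f_mono_set) auto
  finally show ?thesis .
qed

lemma mult_f_le_cdf0:
  assumes "0 \<le> x"
  shows "x * f x \<le> cdf0 f x"
proof -
  have "{0<..x} \<subseteq> {0..x}" by auto
  then show ?thesis
    using set_integral_f_ge[of 0 x "{0..x}"] assms unfolding cdf0_def by simp
qed

lemma cdf0_add:
  assumes "0 \<le> x" "x \<le> y"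
  shows "cdf0 f y = cdf0 f x + (LBINT t:{x<..y}. f t)"
proof -
  have "{0..y} = {0..x} \<union> {x<..y}" using assms by auto
  then show ?thesis
    unfolding cdf0_def by (metis set_integral_f_Un ivl_disj_int_two(8) atLeastAtMost_borel greaterThanAtMost_borel)
qed

lemma f_eq_if_cdf0_eq_mult:
  assumes "0 < x" "x \<le> y" "cdf0 f y = y * f y"
  shows "f y = f x"
proof -
  have "y * f y \<ge> x * f x + (y - x) * f y"
    using cdf0_add[of x y] mult_f_le_cdf0[of x] set_integral_f_ge[of x y "{x<..y}"] assms by simp
  then have "x * f x \<le> x * f y" by (simp add: algebra_simps)
  then show ?thesis
    using f_antimono[of x y] assms by (simp add: order.antisym)
qed

definition tail_mass :: "real \<Rightarrow> real" where
  "tail_mass x = (LBINT t:{x<..}. f t)"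

lemma tail_mass_nonneg: "0 \<le> tail_mass x"
  unfolding tail_mass_def by (simp add: set_integral_f_nonneg)

lemma tail_mass_pos:
  assumes "0 \<le> x" "x < y" "0 < f y"
  shows "0 < tail_mass x"
proof -
  have "0 < (y - x) * f y" using assms by simp
  also have "\<dots> \<le> tail_mass x"
    unfolding tail_mass_def using assms by (intro set_integral_f_ge) auto
  finally show ?thesis .
qed

lemma f_pos_if_tail_mass_pos:
  assumes "0 \<le> x" "0 < tail_mass x"
  shows "0 < f x"
proof (rule ccontr)
  assume "\<not> 0 < f x"
  then have "f t = 0" if "x < t" for t
    using f_antimono[of x t] f_nonneg[of t] assms(1) that by simp
  then have "tail_mass x = 0"
    unfolding tail_mass_def by (simp add: set_lebesgue_integral_cong[of _ _ _ "\<lambda>_. 0"])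
  with assms(2) show False by simp
qed

lemma first_moment_ge:
  assumes x: "0 \<le> x" and fx: "0 < f x"
  shows "ennreal (x * tail_mass x + (tail_mass x)\<^sup>2 / (2 * f x))
    \<le> (\<integral>\<^sup>+ t\<in>{x..}. ennreal (t * f t) \<partial>lborel)"
proof -
  define T c where "T = tail_mass x" and "c = f x"
  define s where "s = x + T / c"
  have T: "0 \<le> T" and c: "0 < c" and s: "x \<le> s"
    using tail_mass_nonneg fx unfolding T_def c_def s_def by auto
  have pointwise: "ennreal (s * f t) * indicator {x<..} t
      \<le> ennreal (t * f t) * indicator {x..} t + ennreal (c * (s - t)) * indicator {x..s} t" for t
  proof (cases "x < t")
    case True
    have "f t \<le> c" using f_antimono x True unfolding c_def by simp
    show ?thesis
    proof (cases "t \<le> s")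
      case True
      have "s * f t \<le> t * f t + c * (s - t)"
        using \<open>f t \<le> c\<close> True mult_left_mono[of "f t" c "s - t"] by (simp add: algebra_simps)
      then have "ennreal (s * f t) \<le> ennreal (t * f t + c * (s - t))"
        by (rule ennreal_leI)
      also have "\<dots> = ennreal (t * f t) + ennreal (c * (s - t))"
        using \<open>x < t\<close> True x c f_nonneg[of t] by (intro ennreal_plus) auto
      finally show ?thesis using \<open>x < t\<close> True by simp
    next
      case False
      then have "ennreal (s * f t) \<le> ennreal (t * f t)"
        using f_nonneg[of t] by (intro ennreal_leI mult_right_mono) auto
      then show ?thesis using \<open>x < t\<close> by (simp add: add_increasing2)
    qed
  qed simp
  have "c * (s - x)\<^sup>2 / 2 = T\<^sup>2 / (2 * c)"
    using c unfolding s_def by (simp add: power2_eq_square)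
  then have decay: "(\<integral>\<^sup>+ t. ennreal (c * (s - t)) * indicator {x..s} t \<partial>lborel) = ennreal (T\<^sup>2 / (2 * c))"
    using nn_integral_linear_decay[of c x s] c s by simp
  have "T\<^sup>2 / (2 * c) + (x * T + T\<^sup>2 / (2 * c)) = s * T"
    using c unfolding s_def by (simp add: field_simps power2_eq_square)
  then have "ennreal (T\<^sup>2 / (2 * c)) + ennreal (x * T + T\<^sup>2 / (2 * c)) = ennreal (s * T)"
    using c x T by (subst ennreal_plus[symmetric]) auto
  also have "\<dots> = (\<integral>\<^sup>+ t\<in>{x<..}. ennreal (s * f t) \<partial>lborel)"
    using x T s f_nonneg unfolding T_def tail_mass_def
    by (subst nn_set_integral_eq_set_integral) (auto simp: f_integrable)
  also have "\<dots> \<le> (\<integral>\<^sup>+ t. ennreal (t * f t) * indicator {x..} t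
      + ennreal (c * (s - t)) * indicator {x..s} t \<partial>lborel)"
    by (intro nn_integral_mono pointwise)
  also have "\<dots> = ennreal (T\<^sup>2 / (2 * c)) + (\<integral>\<^sup>+ t\<in>{x..}. ennreal (t * f t) \<partial>lborel)"
    by (subst nn_integral_add) (auto simp: decay add.commute)
  finally show ?thesis
    by (simp add: ennreal_add_left_cancel_le T_def c_def)
qed

end

locale half_mass_density = nonincreasing_density +
  assumes halfline_mass: "(LBINT t:{0..}. f t) = 1 / 2"
begin

lemma cdf0_add_tail_mass:
  assumes "0 \<le> x"
  shows "cdf0 f x + tail_mass x = 1 / 2"
proof -
  have "{0..} = {0..x} \<union> {x<..}" using assms by auto
  then show ?thesis
    using halfline_mass unfolding cdf0_def tail_mass_def
    by (metis set_integral_f_Un ivl_disj_int_one(7) atLeastAtMost_borel greaterThan_borel)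
qed

lemma alpha_ge:
  assumes x: "0 \<le> x"
  shows "ereal (2 * (tail_mass x)\<^sup>2 * (cdf0 f x - x * f x) / f x) \<le> alpha f x"
proof (cases "tail_mass x = 0")
  case True
  then have F: "cdf0 f x = 1 / 2" using cdf0_add_tail_mass[OF x] by simp
  have "ereal (4 * (1 / 2) * 0 - x / 2 + 2 * x * (1 / 2)\<^sup>2) \<le> alpha f x"
    unfolding alpha_def F by (rule ereal_affine_mono) (auto simp flip: zero_ereal_def)
  then show ?thesis using True by (simp add: power2_eq_square)
next
  case False
  define F T c where "F = cdf0 f x" and "T = tail_mass x" and "c = f x"
  define g where "g = x * T + T\<^sup>2 / (2 * c)"
  have T: "0 < T" using False tail_mass_nonneg unfolding T_def by (simp add: order_less_le)
  have c: "0 < c" using f_pos_if_tail_mass_pos[OF x] T unfolding T_def c_def .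
  have F: "0 \<le> F" unfolding F_def cdf0_def by (simp add: set_integral_f_nonneg)
  have g: "0 \<le> g" using x T c unfolding g_def by simp
  have "ennreal g \<le> (\<integral>\<^sup>+ t\<in>{x..}. ennreal (t * f t) \<partial>lborel)"
    using first_moment_ge[OF x] c unfolding g_def T_def c_def by simp
  then have "ereal g \<le> enn2ereal (\<integral>\<^sup>+ t\<in>{x..}. ennreal (t * f t) \<partial>lborel)"
    using g by (metis enn2ereal_ennreal less_eq_ennreal.rep_eq)
  then have "ereal (4 * F * g - x / 2 + 2 * x * F\<^sup>2) \<le> alpha f x"
    using F unfolding alpha_def F_def by (intro ereal_affine_mono) auto
  moreover have "4 * F * g - x / 2 + 2 * x * F\<^sup>2 = 2 * T\<^sup>2 * (F - x * c) / c"
  proof -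
    have T_eq: "T = 1 / 2 - F" using cdf0_add_tail_mass[OF x] unfolding F_def T_def by simp
    show ?thesis unfolding g_def T_eq using c by (simp add: field_simps power2_eq_square)
  qed
  ultimately show ?thesis unfolding F_def T_def c_def by simp
qed

lemma alpha_nonneg:
  assumes "0 \<le> x"
  shows "0 \<le> alpha f x"
proof -
  have "(0::ereal) \<le> ereal (2 * (tail_mass x)\<^sup>2 * (cdf0 f x - x * f x) / f x)"
    using mult_f_le_cdf0[OF assms] f_nonneg[of x] by simp
  also have "\<dots> \<le> alpha f x" by (rule alpha_ge[OF assms])
  finally show ?thesis .
qed

lemma alpha_pos_if_strictly_antimono:
  assumes strict: "\<And>s t. 0 \<le> s \<Longrightarrow> s < t \<Longrightarrow> f t < f s" and x: "0 < x"
  shows "0 < alpha f x"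
proof -
  have "0 \<le> f (x + 2)" by (rule f_nonneg)
  also have "\<dots> < f (x + 1)" using strict x by simp
  finally have T: "0 < tail_mass x" using tail_mass_pos[of x "x + 1"] x by simp
  have c: "0 < f x" using f_pos_if_tail_mass_pos T x by simp
  have "x * f x < x / 2 * f (x / 2) + x / 2 * f x"
    using strict[of "x / 2" x] x by (simp add: field_simps)
  also have "\<dots> \<le> cdf0 f x"
    using cdf0_add[of "x / 2" x] mult_f_le_cdf0[of "x / 2"] set_integral_f_ge[of "x / 2" x "{x / 2<..x}"] x
    by simp
  finally have "(0::ereal) < ereal (2 * (tail_mass x)\<^sup>2 * (cdf0 f x - x * f x) / f x)"
    using T c by simp
  also have "\<dots> \<le> alpha f x" using alpha_ge x by simp
  finally show ?thesis .
qed

lemma ex_f_pos: "\<exists>y>0. 0 < f y"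
proof (rule ccontr)
  assume "\<not> ?thesis"
  then have zero: "f t = 0" if "0 < t" for t
    using f_nonneg[of t] that by force
  have "AE t in lborel. t \<in> {0..} \<longrightarrow> f t = 0"
    using AE_lborel_singleton[of 0] by eventually_elim (auto simp: zero)
  then have "(LBINT t:{0..}. f t) = (LBINT t:{0::real..}. 0)"
    by (intro set_lebesgue_integral_cong_AE) auto
  then show False using halfline_mass by simp
qed

lemma cdf0_eq_mult_if_alpha_eq_0:
  assumes "0 \<le> x" "x < y" "0 < f y" "alpha f x = 0"
  shows "cdf0 f x = x * f x"
proof -
  have T: "0 < tail_mass x" using tail_mass_pos assms by simp
  have c: "0 < f x" using f_pos_if_tail_mass_pos T assms by simp
  have "2 * (tail_mass x)\<^sup>2 * (cdf0 f x - x * f x) / f x \<le> 0"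
    using alpha_ge[of x] assms by simp
  then have "cdf0 f x \<le> x * f x"
    using T c by (simp add: divide_le_0_iff mult_le_0_iff)
  then show ?thesis using mult_f_le_cdf0 assms by (simp add: order.antisym)
qed

lemma f_eq_below_pos_if_alpha_eq_0:
  assumes zero: "\<And>x. 0 \<le> x \<Longrightarrow> alpha f x = 0"
    and "0 < f y" "0 < s" "s < y" "0 < t" "t < y"
  shows "f s = f t"
proof -
  have "f u = f (min s t)" if "u \<in> {s, t}" for u
    using that assms f_eq_if_cdf0_eq_mult[of "min s t" u] cdf0_eq_mult_if_alpha_eq_0[of u y]
    by auto
  then show ?thesis by simp
qed

lemma cdf0_eq_if_AE_step:
  assumes step: "AE t in lborel. 0 \<le> t \<longrightarrow> f t = (if t \<le> a then k else 0)"
    and "0 \<le> x" "x \<le> a"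
  shows "cdf0 f x = k * x"
proof -
  have "cdf0 f x = (LBINT t:{0..x}. k)"
    unfolding cdf0_def
    by (rule set_lebesgue_integral_cong_AE) (use step assms in \<open>auto elim!: eventually_mono\<close>)
  then show ?thesis using assms by (simp add: set_integral_const)
qed

lemma tail_mass_eq_0_if_AE_step:
  assumes step: "AE t in lborel. 0 \<le> t \<longrightarrow> f t = (if t \<le> a then k else 0)"
    and "0 \<le> a" "a \<le> x"
  shows "tail_mass x = 0"
proof -
  have "tail_mass x = (LBINT t:{x<..}. 0)"
    unfolding tail_mass_def
    by (rule set_lebesgue_integral_cong_AE) (use step assms in \<open>auto elim!: eventually_mono\<close>)
  then show ?thesis by simp
qed

lemma AE_step_if_alpha_eq_0:
  assumes zero: "\<And>x. 0 \<le> x \<Longrightarrow> alpha f x = 0"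
  shows "\<exists>a>0. AE t in lborel. 0 \<le> t \<longrightarrow> f t = (if t \<le> a then 1 / (2 * a) else 0)"
proof -
  define P where "P = {y. 0 < y \<and> 0 < f y}"
  obtain y0 where y0: "y0 \<in> P" using ex_f_pos unfolding P_def by auto
  define k where "k = f (y0 / 2)"
  have k_pos: "0 < k"
    using f_antimono[of "y0 / 2" y0] y0 unfolding P_def k_def by simp
  have f_eq_k: "f t = k" if "0 < t" "t < y" "y \<in> P" for t y
    using f_eq_below_pos_if_alpha_eq_0[OF zero, of "max y y0" t "y0 / 2"] that y0
    unfolding P_def k_def by (auto simp: max_def)
  have P_bound: "y \<le> 1 / k" if "y \<in> P" for y
  proof -
    have "y / 2 * k = cdf0 f (y / 2)"
      using cdf0_eq_mult_if_alpha_eq_0[OF _ _ _ zero, of "y / 2" y] f_eq_k[of "y / 2" y] that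
      unfolding P_def by simp
    also have "\<dots> \<le> 1 / 2"
      using cdf0_add_tail_mass[of "y / 2"] tail_mass_nonneg[of "y / 2"] that unfolding P_def by simp
    finally show ?thesis using k_pos by (simp add: field_simps)
  qed
  then have bdd: "bdd_above P" by (rule bdd_aboveI)
  define a where "a = Sup P"
  have a_pos: "0 < a"
    using cSup_upper[OF y0 bdd] y0 unfolding P_def a_def by simp
  have step: "AE t in lborel. 0 \<le> t \<longrightarrow> f t = (if t \<le> a then k else 0)"
    using AE_lborel_singleton[of 0] AE_lborel_singleton[of a]
  proof eventually_elim
    case (elim t)
    show ?case
    proof (cases "t < a")
      case True
      then obtain y where "y \<in> P" "t < y"
        using less_cSup_iff[of P t] y0 bdd unfolding a_def by auto
      then show ?thesis using f_eq_k[of t y] True elim by auto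
    next
      case False
      then have "t \<notin> P" if "a < t" using cSup_upper[OF _ bdd, of t] that unfolding a_def by auto
      then show ?thesis using False elim a_pos f_nonneg[of t] unfolding P_def by auto
    qed
  qed
  have "k * a = 1 / 2"
    using cdf0_add_tail_mass[of a] cdf0_eq_if_AE_step[OF step, of a]
      tail_mass_eq_0_if_AE_step[OF step, of a] a_pos by simp
  then have "k = 1 / (2 * a)" using a_pos by (simp add: field_simps)
  then show ?thesis using step a_pos by auto
qed

lemma alpha_eq_0_if_AE_step:
  assumes step: "AE t in lborel. 0 \<le> t \<longrightarrow> f t = (if t \<le> a then 1 / (2 * a) else 0)"
    and a: "0 < a" and x: "0 \<le> x"
  shows "alpha f x = 0"
proof (cases "x \<le> a")
  case True
  have F: "cdf0 f x = x / (2 * a)"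
    using cdf0_eq_if_AE_step[OF step x True] by simp
  have "(\<integral>\<^sup>+ t\<in>{x..}. ennreal (t * f t) \<partial>lborel)
      = (\<integral>\<^sup>+ t. ennreal (1 / (2 * a) * t) * indicator {x..a} t \<partial>lborel)"
    by (rule nn_integral_cong_AE)
      (use step AE_lborel_singleton[of a] x in \<open>auto elim!: eventually_mono simp: indicator_def\<close>)
  also have "\<dots> = ennreal (1 / (2 * a) * ((a\<^sup>2 - x\<^sup>2) / 2))"
  proof (rule nn_integral_has_integral_lebesgue')
    show "((\<lambda>t. 1 / (2 * a) * t) has_integral 1 / (2 * a) * ((a\<^sup>2 - x\<^sup>2) / 2)) {x..a}"
      by (rule has_integral_mult_right[OF ident_has_integral[OF True]])
  qed (use x a in auto)
  finally have G: "(\<integral>\<^sup>+ t\<in>{x..}. ennreal (t * f t) \<partial>lborel) = ennreal ((a\<^sup>2 - x\<^sup>2) / (4 * a))"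
    by simp
  have "0 \<le> (a\<^sup>2 - x\<^sup>2) / (4 * a)" using True x a by (simp add: power_mono)
  moreover have "4 * (x / (2 * a)) * ((a\<^sup>2 - x\<^sup>2) / (4 * a)) - x / 2 + 2 * x * (x / (2 * a))\<^sup>2 = 0"
    using a by (simp add: field_simps power2_eq_square)
  ultimately show ?thesis unfolding alpha_def F G by simp
next
  case False
  have F: "cdf0 f x = 1 / 2"
    using cdf0_add_tail_mass[OF x] tail_mass_eq_0_if_AE_step[OF step, of x] a False by simp
  have G: "(\<integral>\<^sup>+ t\<in>{x..}. ennreal (t * f t) \<partial>lborel) = 0"
    using step False x by (auto intro!: nn_integral_0_iff_AE[THEN iffD2] elim!: eventually_mono
        simp: indicator_def)
  show ?thesis unfolding alpha_def F G by (simp add: power2_eq_square zero_ennreal.rep_eq)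
qed

end

theorem lemma2:
  fixes f :: "real \<Rightarrow> real"
  assumes meas: "f \<in> borel_measurable borel"
    and nonneg: "\<And>t. f t \<ge> 0"
    and density: "(\<integral>\<^sup>+ t. ennreal (f t) \<partial>lborel) = 1"
    and mono: "\<And>s t. 0 \<le> s \<Longrightarrow> s \<le> t \<Longrightarrow> f t \<le> f s"
    and half: "(\<integral>\<^sup>+ t\<in>{0..}. ennreal (f t) \<partial>lborel) = 1 / 2"
  shows "(\<forall>x\<ge>0. alpha f x \<ge> 0)
    \<and> ((\<forall>s t. 0 \<le> s \<longrightarrow> s < t \<longrightarrow> f t < f s) \<longrightarrow> (\<forall>x>0. alpha f x > 0))
    \<and> ((\<forall>x\<ge>0. alpha f x = 0) \<longleftrightarrow>
        (\<exists>a>0. AE t in lborel. t \<ge> 0 \<longrightarrow> f t = (if t \<le> a then 1 / (2 * a) else 0)))"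
proof -
  have integrable: "integrable lborel f"
    using meas nonneg density by (intro integrableI_nn_integral_finite[where x = 1]) auto
  interpret nonincreasing_density f
    using meas nonneg integrable mono by unfold_locales
  have "ennreal (LBINT t:{0..}. f t) = ennreal (1 / 2)"
    using nn_set_integral_eq_set_integral[OF integrable, of "{0..}"] nonneg half
      ennreal_divide_numeral[of 1 "num.Bit0 num.One"] by simp
  then have "(LBINT t:{0..}. f t) = 1 / 2"
    by (subst (asm) ennreal_inj) (auto simp: set_integral_f_nonneg)
  then interpret half_mass_density f
    by unfold_locales
  show ?thesis
    using alpha_nonneg alpha_pos_if_strictly_antimono AE_step_if_alpha_eq_0 alpha_eq_0_if_AE_step
    by blast
qed

end
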